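(* Let $X$ be a real Banach space that is uniformly convex and uniformly smooth (hence reflexive), with norm dual $X^*$, and let $J:X\to X^*$ be its normalized duality map, with inverse $J^{-1}:X^*\to X$. Then the polar $K^\circ$ of every nonempty closed convex cone $K\subseteq X$ is convex if and only if, for every two-dimensional linear subspace $D^*\subseteq X^*$, the image $J^{-1}(D^* )$ is a two-dimensional linear subspace of $X$.
   Context: For a nonempty closed convex set $C\subseteq X$ the metric projection $P_C:X\to C$ is $P_Cx=\operatorname{argmin}\{\|x-c\|:c\in C\}$; in a uniformly convex, uniformly smooth Banach space it is well defined, single valued and continuous. A cone is a nonempty set $K$ with $\lambda x\in K$ for all $x\in K$, $\lambda\ge 0$; a convex cone additionally satisfies $x+y\in K$ for all $x,y\in K$. The polar of a closed convex cone $K$ is $K^\circ=\{x\in X: P_Kx=0\}$. The normalized duality map $J:X\to X^*$ is defined by $\langle Jx,x\rangle=\|Jx\|_{X^*}\|x\|=\|x\|^2=\|Jx\|_{X^*}^2$, where $\langle\cdot,\cdot\rangle$ is the duality pairing; in this setting $J$ is a well-defined, positively homogeneous (indeed odd and homogeneous) homeomorphism of $X$ onto $X^*$. *)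

theory Defs
  imports "HOL-Analysis.Analysis"
begin

definition uniformly_convex :: "'a::real_normed_vector itself \<Rightarrow> bool" where
  "uniformly_convex (TYPE('a)) \<longleftrightarrow>
     (\<forall>\<epsilon>>0. \<exists>\<delta>>0. \<forall>x y::'a. norm x \<le> 1 \<and> norm y \<le> 1 \<and> norm (x - y) \<ge> \<epsilon>
          \<longrightarrow> norm ((1/2) *\<^sub>R (x + y)) \<le> 1 - \<delta>)"

text \<open>Uniform smoothness: the modulus of smoothness rho satisfies rho(t)/t \<rightarrow> 0 as t \<rightarrow> 0+.\<close>
definition uniformly_smooth :: "'a::real_normed_vector itself \<Rightarrow> bool" where
  "uniformly_smooth (TYPE('a)) \<longleftrightarrow>
     (\<forall>\<epsilon>>0. \<exists>\<delta>>0. \<forall>t. 0 < t \<and> t \<le> \<delta> \<longrightarrow>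
        (\<forall>x y::'a. norm x = 1 \<and> norm y = t \<longrightarrow>
            (norm (x + y) + norm (x - y)) / 2 - 1 \<le> \<epsilon> * t))"

text \<open>Metric projection onto C (well defined and single valued in the setting of the paper).\<close>
definition metric_projection :: "'a::real_normed_vector set \<Rightarrow> 'a \<Rightarrow> 'a" where
  "metric_projection C x = (THE c. c \<in> C \<and> (\<forall>d\<in>C. norm (x - c) \<le> norm (x - d)))"

definition polar :: "'a::real_normed_vector set \<Rightarrow> 'a set" where
  "polar K = {x. metric_projection K x = 0}"

definition duality_map :: "'a::real_normed_vector \<Rightarrow> ('a \<Rightarrow>\<^sub>L real)" where
  "duality_map x = (SOME f. blinfun_apply f x = norm x ^ 2 \<and> norm f = norm x)"

end

theory Submission
  imports Defs
begin

text \<open>Write \<open>J\<close> for the duality map. Uniform smoothness makes the norm Gateaux differentiable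
  away from the origin, and \<open>J x\<close> is then the unique norming functional at \<open>x\<close>: \<open>norm x\<close>
  times the derivative of the norm at \<open>x\<close>. Uniform convexity makes minimizing sequences
  Cauchy; hence \<open>J\<close> is injective, every functional attains its norm (so \<open>J\<close> is onto), and
  nearest points in closed convex sets exist and are unique. It follows that \<open>x\<close> lies in the
  polar of a closed convex cone \<open>K\<close> iff \<open>J x \<le> 0\<close> on \<open>K\<close>.

  If all polars are convex, let \<open>D = span {f, g}\<close> and let \<open>K\<close> be the common kernel of \<open>f\<close> and
  \<open>g\<close>. The polar of \<open>K\<close> is the preimage of \<open>D\<close>; being convex and invariant under all
  scalings, it is a subspace. It contains \<open>x\<^sub>1, x\<^sub>2\<close> with \<open>J x\<^sub>1 = f\<close>, \<open>J x\<^sub>2 = g\<close>, and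
  each of its vectors annihilated by \<open>f\<close> and \<open>g\<close> is annihilated by its own image under \<open>J\<close>,
  so the preimage is \<open>span {x\<^sub>1, x\<^sub>2}\<close>.

  Conversely, let \<open>x, y\<close> be non-collinear points of a polar. By hypothesis
  \<open>J (x + y) = a J x + b J y\<close>, and the strict Cauchy--Schwarz inequality
  \<open>J u v * J v u < norm u\<^sup>2 * norm v\<^sup>2\<close> for non-collinear \<open>u, v\<close>, applied to the pairs
  \<open>(x, x + y)\<close> and \<open>(x + y, y)\<close>, forces \<open>a, b > 0\<close>; hence \<open>x + y\<close> lies in the polar.\<close>

section \<open>Uniform convexity\<close>

lemma uniformly_convexD:
  assumes "uniformly_convex TYPE('a::real_normed_vector)" and "e > 0"
  shows "\<exists>d>0. \<forall>x y :: 'a. \<forall>r. norm x \<le> r \<and> norm y \<le> r \<and> e * r \<le> norm (x - y) \<longrightarrow>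
           norm (midpoint x y) \<le> (1 - d) * r"
proof -
  obtain d where d: "d > 0" and unit: "\<And>x y::'a. norm x \<le> 1 \<Longrightarrow> norm y \<le> 1 \<Longrightarrow>
      e \<le> norm (x - y) \<Longrightarrow> norm ((1/2) *\<^sub>R (x + y)) \<le> 1 - d"
    using assms unfolding uniformly_convex_def by meson
  have "norm (midpoint x y) \<le> (1 - d) * r"
    if xy: "norm x \<le> r" "norm y \<le> r" "e * r \<le> norm (x - y)" for x y :: 'a and r
  proof (cases "r > 0")
    case True
    define x' y' where "x' = (1/r) *\<^sub>R x" and "y' = (1/r) *\<^sub>R y"
    have "norm x' \<le> 1" "norm y' \<le> 1"
      using xy True by (simp_all add: x'_def y'_def pos_divide_le_eq)
    moreover have "x' - y' = (1/r) *\<^sub>R (x - y)"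
      by (simp add: x'_def y'_def algebra_simps)
    then have "e \<le> norm (x' - y')"
      using xy True by (simp add: pos_le_divide_eq)
    ultimately have "norm ((1/2) *\<^sub>R (x' + y')) \<le> 1 - d"
      by (rule unit)
    moreover have "(1/2) *\<^sub>R (x' + y') = (1/r) *\<^sub>R midpoint x y"
      by (simp add: x'_def y'_def midpoint_def algebra_simps)
    ultimately have "norm (midpoint x y) / r \<le> 1 - d"
      using True by simp
    then show ?thesis
      using True by (simp add: pos_divide_le_eq)
  next
    case False
    then have "norm x \<le> 0" "norm y \<le> 0" using xy by linarith+
    then show ?thesis using xy False \<open>e > 0\<close> by (simp add: mult_le_0_iff)
  qed
  with d show ?thesis by blast
qed

lemma uniformly_convex_midpoint_eq:
  fixes u v :: "'a::real_normed_vector"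
  assumes uc: "uniformly_convex TYPE('a)"
    and "norm u \<le> r" "norm v \<le> r" "r \<le> norm (midpoint u v)"
  shows "u = v"
proof (rule ccontr)
  assume "u \<noteq> v"
  have r: "r > 0"
  proof (rule ccontr)
    assume "\<not> r > 0"
    then have "norm u \<le> 0" "norm v \<le> 0" using assms(2,3) by linarith+
    then have "u = 0" "v = 0" by simp_all
    with \<open>u \<noteq> v\<close> show False by simp
  qed
  define e where "e = norm (u - v) / r"
  have "e > 0" using \<open>u \<noteq> v\<close> r by (simp add: e_def)
  then obtain d where "d > 0" and "\<forall>x y :: 'a. \<forall>r. norm x \<le> r \<and> norm y \<le> r \<and>
      e * r \<le> norm (x - y) \<longrightarrow> norm (midpoint x y) \<le> (1 - d) * r"
    using uniformly_convexD[OF uc] by blast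
  note mid = this(2)[rule_format, OF conjI, OF _ conjI]
  have "e * r = norm (u - v)"
    using r by (simp add: e_def)
  then have "norm (midpoint u v) \<le> (1 - d) * r"
    using assms(2,3) by (intro mid) simp_all
  with assms(4) mult_pos_pos[OF \<open>d > 0\<close> r] show False
    by (simp add: algebra_simps)
qed

lemma uniformly_convex_diff_less:
  assumes uc: "uniformly_convex TYPE('a::real_normed_vector)" and r: "r > 0" and e: "e > 0"
  shows "\<exists>\<eta>>0. \<forall>x y :: 'a. \<forall>t. 0 \<le> t \<and> t < \<eta> \<and> norm x \<le> r + t \<and> norm y \<le> r + t \<and>
           r - t \<le> norm (midpoint x y) \<longrightarrow> norm (x - y) < e"
proof -
  have e': "e / (r + 1) > 0" using e r by simp
  obtain d where d: "d > 0" and "\<forall>x y :: 'a. \<forall>\<rho>. norm x \<le> \<rho> \<and> norm y \<le> \<rho> \<and>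
      e / (r + 1) * \<rho> \<le> norm (x - y) \<longrightarrow> norm (midpoint x y) \<le> (1 - d) * \<rho>"
    using uniformly_convexD[OF uc e'] by blast
  note mid = this(2)[rule_format, OF conjI, OF _ conjI]
  have "norm (x - y) < e"
    if t: "0 \<le> t" "t < min 1 (d * r / 2)" and xy: "norm x \<le> r + t" "norm y \<le> r + t"
      and mid_ge: "r - t \<le> norm (midpoint x y)" for x y :: 'a and t
  proof (rule ccontr)
    assume "\<not> ?thesis"
    moreover have "e / (r + 1) * (r + t) \<le> e / (r + 1) * (r + 1)"
      using t e' by (intro mult_left_mono) simp_all
    ultimately have "norm (midpoint x y) \<le> (1 - d) * (r + t)"
      using xy r by (intro mid) simp_all
    with mid_ge have "d * r \<le> 2 * t - d * t"
      by (simp add: algebra_simps)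
    with t mult_nonneg_nonneg[of d t] d show False by linarith
  qed
  moreover have "min 1 (d * r / 2) > 0" using d r by simp
  ultimately show ?thesis by blast
qed

lemma uniformly_convex_Cauchy:
  fixes s :: "nat \<Rightarrow> 'a::real_normed_vector"
  assumes uc: "uniformly_convex TYPE('a)" and r: "r \<ge> 0"
    and \<epsilon>: "\<epsilon> \<longlonglongrightarrow> 0" "\<And>n. 0 \<le> \<epsilon> n"
    and norm_le: "\<And>n. norm (s n) \<le> r + \<epsilon> n"
    and midpoint_ge: "\<And>m n. r - (\<epsilon> m + \<epsilon> n) \<le> norm (midpoint (s m) (s n))"
  shows "Cauchy s"
proof (cases "r = 0")
  case True
  have "(\<lambda>n. norm (s n)) \<longlonglongrightarrow> 0"
  proof (rule tendsto_sandwich[OF _ _ tendsto_const \<epsilon>(1)])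
    show "eventually (\<lambda>n. norm (s n) \<le> \<epsilon> n) sequentially"
      using norm_le True by (simp add: always_eventually)
  qed simp
  then show ?thesis
    by (simp add: tendsto_norm_zero_iff LIMSEQ_imp_Cauchy)
next
  case False
  with r have r: "r > 0" by simp
  show ?thesis
    unfolding Cauchy_iff
  proof (intro allI impI)
    fix e :: real assume "e > 0"
    then obtain \<eta> where "\<eta> > 0" and "\<forall>x y :: 'a. \<forall>t. 0 \<le> t \<and> t < \<eta> \<and> norm x \<le> r + t \<and>
        norm y \<le> r + t \<and> r - t \<le> norm (midpoint x y) \<longrightarrow> norm (x - y) < e"
      using uniformly_convex_diff_less[OF uc r] by blast
    note close = this(2)[rule_format]
    have "eventually (\<lambda>n. \<epsilon> n < \<eta> / 2) sequentially"
      using \<open>\<eta> > 0\<close> by (intro order_tendstoD(2)[OF \<epsilon>(1)]) simp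
    then obtain N where N: "\<And>n. n \<ge> N \<Longrightarrow> \<epsilon> n < \<eta> / 2"
      unfolding eventually_sequentially by blast
    have "norm (s m - s n) < e" if "N \<le> m" "N \<le> n" for m n
      using N[OF \<open>N \<le> m\<close>] N[OF \<open>N \<le> n\<close>] \<epsilon>(2)[of m] \<epsilon>(2)[of n]
        norm_le[of m] norm_le[of n] midpoint_ge[of m n]
      by (intro close[of "\<epsilon> m + \<epsilon> n"]) auto
    then show "\<exists>M. \<forall>m\<ge>M. \<forall>n\<ge>M. norm (s m - s n) < e" by blast
  qed
qed

lemma uniformly_convex_limit:
  fixes s :: "nat \<Rightarrow> 'a::banach"
  assumes uc: "uniformly_convex TYPE('a)" and r: "r \<ge> 0"
    and \<epsilon>: "\<epsilon> \<longlonglongrightarrow> 0" "\<And>n. 0 \<le> \<epsilon> n"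
    and norm_le: "\<And>n. norm (s n) \<le> r + \<epsilon> n"
    and midpoint_ge: "\<And>m n. r - (\<epsilon> m + \<epsilon> n) \<le> norm (midpoint (s m) (s n))"
  obtains l where "s \<longlonglongrightarrow> l" "norm l = r"
proof -
  obtain l where l: "s \<longlonglongrightarrow> l"
    using uniformly_convex_Cauchy[OF assms] Cauchy_convergent_iff convergent_def by blast
  have "(\<lambda>n. norm (s n)) \<longlonglongrightarrow> r"
  proof (rule tendsto_sandwich[of "\<lambda>n. r - 2 * \<epsilon> n" _ _ "\<lambda>n. r + \<epsilon> n"])
    show "eventually (\<lambda>n. r - 2 * \<epsilon> n \<le> norm (s n)) sequentially"
      using midpoint_ge by (intro always_eventually allI) (metis midpoint_idem mult_2)
    show "(\<lambda>n. r - 2 * \<epsilon> n) \<longlonglongrightarrow> r" "(\<lambda>n. r + \<epsilon> n) \<longlonglongrightarrow> r"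
      using tendsto_diff[OF tendsto_const tendsto_mult[OF tendsto_const \<epsilon>(1)], of r 2]
        tendsto_add[OF tendsto_const \<epsilon>(1), of r] by simp_all
  qed (use norm_le in \<open>simp add: always_eventually\<close>)
  then have "norm l = r"
    using LIMSEQ_unique tendsto_norm[OF l] by blast
  with l that show thesis by blast
qed

section \<open>Nearest points\<close>

lemma midpoint_diff_left: "midpoint (x - a) (x - b) = x - midpoint a b"
proof -
  have sum: "(x - a) + (x - b) = 2 *\<^sub>R x - (a + b)"
    by (simp add: scaleR_2 algebra_simps)
  show ?thesis
    unfolding midpoint_def sum scaleR_diff_right by simp
qed

lemma infdist_minimizing_sequence:
  fixes K :: "'a::real_normed_vector set"
  assumes "K \<noteq> {}"
  obtains c where "\<And>n. c n \<in> K" "(\<lambda>n. norm (x - c n)) \<longlonglongrightarrow> infdist x K"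
proof -
  have "\<exists>c\<in>K. norm (x - c) < infdist x K + inverse (Suc n)" for n
  proof -
    have "Inf (dist x ` K) < infdist x K + inverse (Suc n)"
      using assms by (simp add: infdist_def)
    then have "\<exists>t \<in> dist x ` K. t < infdist x K + inverse (Suc n)"
      using assms by (intro cInf_lessD) simp_all
    then show ?thesis
      by (auto simp: dist_norm)
  qed
  then obtain c where cK: "\<And>n. c n \<in> K"
    and c_near: "\<And>n. norm (x - c n) < infdist x K + inverse (Suc n)"
    by metis
  have "(\<lambda>n. norm (x - c n)) \<longlonglongrightarrow> infdist x K"
  proof (rule tendsto_sandwich[OF _ _ tendsto_const])
    show "(\<lambda>n. infdist x K + inverse (Suc n)) \<longlonglongrightarrow> infdist x K"
      using tendsto_add[OF tendsto_const LIMSEQ_inverse_real_of_nat] by simp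
    show "eventually (\<lambda>n. infdist x K \<le> norm (x - c n)) sequentially"
      using infdist_le[OF cK] by (simp add: dist_norm)
    show "eventually (\<lambda>n. norm (x - c n) \<le> infdist x K + inverse (Suc n)) sequentially"
    proof (intro always_eventually allI)
      fix n show "norm (x - c n) \<le> infdist x K + inverse (Suc n)"
        using c_near[of n] by simp
    qed
  qed
  then show thesis by (rule that[OF cK])
qed

lemma nearest_point_exists:
  fixes K :: "'a::banach set"
  assumes uc: "uniformly_convex TYPE('a)" and K: "closed K" "convex K" "K \<noteq> {}"
  obtains c where "c \<in> K" "\<And>d. d \<in> K \<Longrightarrow> norm (x - c) \<le> norm (x - d)"
proof -
  define r where "r = infdist x K"
  have r_le: "r \<le> norm (x - d)" if "d \<in> K" for d
    unfolding r_def dist_norm[symmetric] by (rule infdist_le[OF that])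
  obtain c where cK: "\<And>n. c n \<in> K" and lim: "(\<lambda>n. norm (x - c n)) \<longlonglongrightarrow> r"
    unfolding r_def using infdist_minimizing_sequence[OF K(3)] by blast
  define \<epsilon> where "\<epsilon> n = norm (x - c n) - r" for n
  have "\<epsilon> \<longlonglongrightarrow> 0"
    using tendsto_diff[OF lim tendsto_const, of r] by (simp add: \<epsilon>_def[abs_def])
  have \<epsilon>_nonneg: "0 \<le> \<epsilon> n" for n
    using r_le[OF cK] by (simp add: \<epsilon>_def)
  have mid: "midpoint (c m) (c n) \<in> K" for m n
    using K(2) cK midpoint_in_closed_segment convex_contains_segment by blast
  obtain l where l: "(\<lambda>n. x - c n) \<longlonglongrightarrow> l" and "norm l = r"
  proof (rule uniformly_convex_limit[OF uc _ \<open>\<epsilon> \<longlonglongrightarrow> 0\<close> \<epsilon>_nonneg])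
    show "0 \<le> r" by (simp add: r_def infdist_nonneg)
    show "norm (x - c n) \<le> r + \<epsilon> n" for n by (simp add: \<epsilon>_def)
    show "r - (\<epsilon> m + \<epsilon> n) \<le> norm (midpoint (x - c m) (x - c n))" for m n
      using r_le[OF mid[of m n]] \<epsilon>_nonneg[of m] \<epsilon>_nonneg[of n]
      by (simp add: midpoint_diff_left)
  qed
  have "c \<longlonglongrightarrow> x - l"
    using tendsto_diff[OF tendsto_const l, of x] by simp
  then have "x - l \<in> K"
    using closed_sequentially[OF K(1)] cK by blast
  with \<open>norm l = r\<close> show thesis
    using that[of "x - l"] r_le by simp
qed

lemma metric_projection_eqI:
  fixes K :: "'a::real_normed_vector set"
  assumes uc: "uniformly_convex TYPE('a)" and "convex K"
    and c: "c \<in> K" and c_min: "\<And>d. d \<in> K \<Longrightarrow> norm (x - c) \<le> norm (x - d)"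
  shows "metric_projection K x = c"
  unfolding metric_projection_def
proof (rule the_equality)
  fix c' assume c': "c' \<in> K \<and> (\<forall>d\<in>K. norm (x - c') \<le> norm (x - d))"
  then have "norm (x - c') = norm (x - c)"
    using c c_min by (meson order_antisym)
  moreover have "midpoint c' c \<in> K"
    using \<open>convex K\<close> c c' midpoint_in_closed_segment convex_contains_segment by blast
  then have "norm (x - c) \<le> norm (midpoint (x - c') (x - c))"
    using c_min by (simp add: midpoint_diff_left)
  ultimately have "x - c' = x - c"
    by (intro uniformly_convex_midpoint_eq[OF uc]) simp_all
  then show "c' = c" by simp
qed (use c c_min in blast)

section \<open>The directional derivative of the norm\<close>

definition norm_diff_quot :: "'a::real_normed_vector \<Rightarrow> 'a \<Rightarrow> real \<Rightarrow> real" where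
  "norm_diff_quot x w s = (norm (x + s *\<^sub>R w) - norm x) / s"

text \<open>By convexity of the norm the difference quotients decrease as \<open>s \<rightarrow> 0+\<close>, so their
  infimum is the one-sided directional derivative of the norm.\<close>

definition norm_dir_deriv :: "'a::real_normed_vector \<Rightarrow> 'a \<Rightarrow> real" where
  "norm_dir_deriv x w = (INF s\<in>{0<..}. norm_diff_quot x w s)"

lemma abs_norm_diff_quot_le:
  assumes "s > 0" shows "\<bar>norm_diff_quot x w s\<bar> \<le> norm w"
proof -
  have "\<bar>norm (x + s *\<^sub>R w) - norm x\<bar> \<le> norm w * s"
    using norm_triangle_ineq3[of "x + s *\<^sub>R w" x] assms by (simp add: mult.commute)
  then show ?thesis
    using assms by (simp add: norm_diff_quot_def abs_divide pos_divide_le_eq)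
qed

lemma norm_diff_quot_mono:
  assumes "0 < s" "s \<le> t"
  shows "norm_diff_quot x w s \<le> norm_diff_quot x w t"
proof -
  define l where "l = s / t"
  have t: "t > 0" and l: "0 < l" "l \<le> 1" "l * t = s"
    using assms by (auto simp: l_def)
  have "x + s *\<^sub>R w = (1 - l) *\<^sub>R x + l *\<^sub>R (x + t *\<^sub>R w)"
    by (simp add: algebra_simps flip: l(3))
  then have "norm (x + s *\<^sub>R w) \<le> (1 - l) * norm x + l * norm (x + t *\<^sub>R w)"
    using l norm_triangle_ineq[of "(1 - l) *\<^sub>R x" "l *\<^sub>R (x + t *\<^sub>R w)"] by simp
  then have "norm (x + s *\<^sub>R w) - norm x \<le> l * (norm (x + t *\<^sub>R w) - norm x)"
    by (simp add: algebra_simps)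
  then show ?thesis
    using assms t by (simp add: norm_diff_quot_def l_def divide_simps mult.commute)
qed

lemma bdd_below_norm_diff_quot: "bdd_below (norm_diff_quot x w ` {0<..})"
proof (rule bdd_belowI)
  fix q assume "q \<in> norm_diff_quot x w ` {0<..}"
  then obtain s where "s > 0" "q = norm_diff_quot x w s" by auto
  then show "- norm w \<le> q"
    using abs_norm_diff_quot_le[of s x w] by linarith
qed

lemma norm_dir_deriv_le: "s > 0 \<Longrightarrow> norm_dir_deriv x w \<le> norm_diff_quot x w s"
  unfolding norm_dir_deriv_def by (rule cInf_lower) (simp_all add: bdd_below_norm_diff_quot)

lemma norm_dir_deriv_greatest:
  "(\<And>s. s > 0 \<Longrightarrow> c \<le> norm_diff_quot x w s) \<Longrightarrow> c \<le> norm_dir_deriv x w"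
  unfolding norm_dir_deriv_def by (rule cINF_greatest) auto

lemma norm_dir_deriv_less_imp:
  "norm_dir_deriv x w < c \<Longrightarrow> \<exists>s>0. norm_diff_quot x w s < c"
  unfolding norm_dir_deriv_def using cInf_lessD[of "norm_diff_quot x w ` {0<..}" c] by auto

lemma abs_norm_dir_deriv_le: "\<bar>norm_dir_deriv x w\<bar> \<le> norm w"
proof -
  have "norm_dir_deriv x w \<le> norm w"
    using norm_dir_deriv_le[of 1 x w] abs_norm_diff_quot_le[of 1 x w] by simp
  moreover have "- norm w \<le> norm_dir_deriv x w"
  proof (rule norm_dir_deriv_greatest)
    fix s :: real assume "s > 0"
    then show "- norm w \<le> norm_diff_quot x w s"
      using abs_norm_diff_quot_le[of s x w] by linarith
  qed
  ultimately show ?thesis by simp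
qed

lemma norm_dir_deriv_0: "norm_dir_deriv x 0 = 0"
  using abs_norm_dir_deriv_le[of x 0] by simp

lemma norm_dir_deriv_self: "norm_dir_deriv x x = norm x"
proof -
  have quot: "norm_diff_quot x x s = norm x" if "s > 0" for s
  proof -
    have "x + s *\<^sub>R x = (1 + s) *\<^sub>R x"
      by (simp add: scaleR_add_left)
    then have "norm (x + s *\<^sub>R x) = (1 + s) * norm x"
      using that by simp
    then show ?thesis
      using that by (simp add: norm_diff_quot_def algebra_simps)
  qed
  show ?thesis
    using norm_dir_deriv_le[of 1 x x] norm_dir_deriv_greatest[of "norm x" x x] quot
    by (simp add: order_antisym)
qed

lemma norm_dir_deriv_scaleR_pos:
  assumes c: "c > 0" shows "norm_dir_deriv x (c *\<^sub>R w) = c * norm_dir_deriv x w"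
proof -
  have quot: "norm_diff_quot x (c *\<^sub>R w) s = c * norm_diff_quot x w (c * s)" if "s > 0" for s
    using c that by (simp add: norm_diff_quot_def mult.commute)
  have "norm_dir_deriv x (c *\<^sub>R w) / c \<le> norm_dir_deriv x w"
  proof (rule norm_dir_deriv_greatest)
    fix s :: real assume "s > 0"
    then have "norm_dir_deriv x (c *\<^sub>R w) \<le> c * norm_diff_quot x w s"
      using norm_dir_deriv_le[of "s / c" x "c *\<^sub>R w"] quot[of "s / c"] c by simp
    then show "norm_dir_deriv x (c *\<^sub>R w) / c \<le> norm_diff_quot x w s"
      using c by (simp add: divide_le_eq mult.commute)
  qed
  moreover have "c * norm_dir_deriv x w \<le> norm_dir_deriv x (c *\<^sub>R w)"
  proof (rule norm_dir_deriv_greatest)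
    fix s :: real assume "s > 0"
    then show "c * norm_dir_deriv x w \<le> norm_diff_quot x (c *\<^sub>R w) s"
      using norm_dir_deriv_le[of "c * s" x w] quot[of s] c by simp
  qed
  ultimately show ?thesis
    using c by (simp add: divide_le_eq mult.commute)
qed

lemma norm_dir_deriv_add_le:
  "norm_dir_deriv x (a + b) \<le> norm_dir_deriv x a + norm_dir_deriv x b"
proof -
  have quot: "norm_diff_quot x (a + b) s \<le> norm_diff_quot x a (2 * s) + norm_diff_quot x b (2 * s)"
    if "s > 0" for s
  proof -
    have half: "(1/2) *\<^sub>R x + (1/2) *\<^sub>R x = x"
      by (simp flip: scaleR_add_left)
    have "x + s *\<^sub>R (a + b) = (1/2) *\<^sub>R (x + (2 * s) *\<^sub>R a) + (1/2) *\<^sub>R (x + (2 * s) *\<^sub>R b)"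
      by (simp add: algebra_simps half)
    then have "norm (x + s *\<^sub>R (a + b)) \<le> (norm (x + (2 * s) *\<^sub>R a) + norm (x + (2 * s) *\<^sub>R b)) / 2"
      using norm_triangle_ineq[of "(1/2) *\<^sub>R (x + (2 * s) *\<^sub>R a)" "(1/2) *\<^sub>R (x + (2 * s) *\<^sub>R b)"]
      by simp
    then show ?thesis
      using that by (simp add: norm_diff_quot_def divide_simps)
  qed
  have "norm_dir_deriv x (a + b) - norm_dir_deriv x b \<le> norm_dir_deriv x a"
  proof (rule norm_dir_deriv_greatest)
    fix s :: real assume s: "s > 0"
    have "norm_dir_deriv x (a + b) \<le> norm_diff_quot x a s + norm_diff_quot x b t" if t: "t > 0" for t
    proof -
      define u where "u = min s t / 2"
      have u: "u > 0" "2 * u \<le> s" "2 * u \<le> t" using s t by (auto simp: u_def)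
      have "norm_dir_deriv x (a + b) \<le> norm_diff_quot x (a + b) u"
        using u by (intro norm_dir_deriv_le) simp
      also have "\<dots> \<le> norm_diff_quot x a (2 * u) + norm_diff_quot x b (2 * u)"
        using u by (intro quot) simp
      also have "\<dots> \<le> norm_diff_quot x a s + norm_diff_quot x b t"
        using u by (intro add_mono norm_diff_quot_mono) simp_all
      finally show ?thesis .
    qed
    then have "norm_dir_deriv x (a + b) - norm_diff_quot x a s \<le> norm_dir_deriv x b"
      by (intro norm_dir_deriv_greatest) (simp add: algebra_simps)
    then show "norm_dir_deriv x (a + b) - norm_dir_deriv x b \<le> norm_diff_quot x a s"
      by simp
  qed
  then show ?thesis by simp
qed

lemma uniformly_smoothD:
  fixes x w :: "'a::real_normed_vector"
  assumes us: "uniformly_smooth TYPE('a)" and "x \<noteq> 0" "w \<noteq> 0" "e > 0"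
  shows "\<exists>s>0. norm (x + s *\<^sub>R w) + norm (x - s *\<^sub>R w) - 2 * norm x \<le> e * s"
proof -
  have nx: "norm x > 0" and nw: "norm w > 0" using assms by auto
  define e' where "e' = e / (2 * norm w)"
  have "e' > 0" using \<open>e > 0\<close> nw by (simp add: e'_def)
  then obtain d where d: "d > 0" and smooth: "\<forall>t. 0 < t \<and> t \<le> d \<longrightarrow>
      (\<forall>x y::'a. norm x = 1 \<and> norm y = t \<longrightarrow> (norm (x + y) + norm (x - y)) / 2 - 1 \<le> e' * t)"
    using us unfolding uniformly_smooth_def by blast
  define s where "s = d * norm x / norm w"
  have s: "s > 0" using d nx nw by (simp add: s_def)
  have "norm ((1 / norm x) *\<^sub>R x) = 1" "norm ((s / norm x) *\<^sub>R w) = d"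
    using nx nw d by (simp_all add: s_def)
  then have "(norm ((1 / norm x) *\<^sub>R x + (s / norm x) *\<^sub>R w)
      + norm ((1 / norm x) *\<^sub>R x - (s / norm x) *\<^sub>R w)) / 2 - 1 \<le> e' * d"
    using smooth d by blast
  moreover have "(1 / norm x) *\<^sub>R x + (s / norm x) *\<^sub>R w = (1 / norm x) *\<^sub>R (x + s *\<^sub>R w)"
    "(1 / norm x) *\<^sub>R x - (s / norm x) *\<^sub>R w = (1 / norm x) *\<^sub>R (x - s *\<^sub>R w)"
    by (simp_all add: algebra_simps)
  ultimately have "(norm (x + s *\<^sub>R w) + norm (x - s *\<^sub>R w)) / norm x \<le> 2 + 2 * e' * d"
    using nx by (simp add: add_divide_distrib)
  then have "norm (x + s *\<^sub>R w) + norm (x - s *\<^sub>R w) \<le> 2 * norm x + e * s"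
    using nx nw by (simp add: divide_le_eq e'_def s_def algebra_simps)
  then show ?thesis using s by (intro exI[of _ s]) simp
qed

lemma norm_dir_deriv_minus:
  fixes x :: "'a::real_normed_vector"
  assumes us: "uniformly_smooth TYPE('a)" and x: "x \<noteq> 0"
  shows "norm_dir_deriv x (- w) = - norm_dir_deriv x w"
proof (cases "w = 0")
  case True then show ?thesis by (simp add: norm_dir_deriv_0)
next
  case False
  have ge: "0 \<le> norm_dir_deriv x w + norm_dir_deriv x (- w)"
    using norm_dir_deriv_add_le[of x w "- w"] by (simp add: norm_dir_deriv_0)
  have "norm_dir_deriv x w + norm_dir_deriv x (- w) \<le> 0"
  proof (rule ccontr)
    define e where "e = (norm_dir_deriv x w + norm_dir_deriv x (- w)) / 2"
    assume "\<not> ?thesis"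
    then have "e > 0" by (simp add: e_def)
    then obtain s where s: "s > 0"
      and small: "norm (x + s *\<^sub>R w) + norm (x - s *\<^sub>R w) - 2 * norm x \<le> e * s"
      using uniformly_smoothD[OF us x False] by blast
    have "norm_dir_deriv x w + norm_dir_deriv x (- w) \<le> norm_diff_quot x w s + norm_diff_quot x (- w) s"
      using s by (intro add_mono norm_dir_deriv_le)
    also have "\<dots> = (norm (x + s *\<^sub>R w) + norm (x - s *\<^sub>R w) - 2 * norm x) / s"
      by (simp add: norm_diff_quot_def diff_divide_distrib add_divide_distrib)
    also have "\<dots> \<le> e"
      using small s by (simp add: pos_divide_le_eq)
    finally show False
      using \<open>e > 0\<close> by (simp add: e_def)
  qed
  with ge show ?thesis by simp
qed

lemma bounded_linear_norm_dir_deriv: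
  fixes x :: "'a::real_normed_vector"
  assumes us: "uniformly_smooth TYPE('a)" and x: "x \<noteq> 0"
  shows "bounded_linear (norm_dir_deriv x)"
proof (rule bounded_linear_intro[where K = 1])
  fix a b :: 'a
  have "- norm_dir_deriv x (a + b) \<le> - norm_dir_deriv x a - norm_dir_deriv x b"
    using norm_dir_deriv_add_le[of x "- a" "- b"] norm_dir_deriv_minus[OF us x, of a]
      norm_dir_deriv_minus[OF us x, of b] norm_dir_deriv_minus[OF us x, of "a + b"] by simp
  then show "norm_dir_deriv x (a + b) = norm_dir_deriv x a + norm_dir_deriv x b"
    using norm_dir_deriv_add_le[of x a b] by simp
next
  fix c :: real and w :: 'a
  consider "c > 0" | "c = 0" | "c < 0" by linarith
  then show "norm_dir_deriv x (c *\<^sub>R w) = c *\<^sub>R norm_dir_deriv x w"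
  proof cases
    case 3
    then have "norm_dir_deriv x (c *\<^sub>R w) = - norm_dir_deriv x ((- c) *\<^sub>R w)"
      using norm_dir_deriv_minus[OF us x, of "(- c) *\<^sub>R w"] by simp
    with 3 norm_dir_deriv_scaleR_pos[of "- c" x w] show ?thesis by simp
  qed (simp_all add: norm_dir_deriv_scaleR_pos norm_dir_deriv_0)
next
  fix w :: 'a show "norm (norm_dir_deriv x w) \<le> norm w * 1"
    using abs_norm_dir_deriv_le by simp
qed

section \<open>The normalized duality map\<close>

lemma norming_functional_exists:
  fixes x :: "'a::real_normed_vector"
  assumes us: "uniformly_smooth TYPE('a)"
  shows "\<exists>f::'a \<Rightarrow>\<^sub>L real. blinfun_apply f x = norm x ^ 2 \<and> norm f = norm x"
proof (cases "x = 0")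
  case True then show ?thesis by (intro exI[of _ 0]) simp
next
  case False
  define f where "f = Blinfun (\<lambda>w. norm x * norm_dir_deriv x w)"
  have f: "f w = norm x * norm_dir_deriv x w" for w
    unfolding f_def using bounded_linear_norm_dir_deriv[OF us False]
    by (simp add: bounded_linear_Blinfun_apply bounded_linear_const_mult)
  have "f x = norm x ^ 2"
    by (simp add: f norm_dir_deriv_self power2_eq_square)
  moreover have "norm f \<le> norm x"
  proof (rule norm_blinfun_bound)
    show "norm (f w) \<le> norm x * norm w" for w
      using mult_left_mono[OF abs_norm_dir_deriv_le[of x w] norm_ge_zero[of x]] by (simp add: f abs_mult)
  qed simp
  moreover have "norm x ^ 2 \<le> norm f * norm x"
    using norm_blinfun[of f x] \<open>f x = norm x ^ 2\<close> by simp
  then have "norm x \<le> norm f"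
    using False by (simp add: power2_eq_square)
  ultimately show ?thesis by (intro exI[of _ f]) simp
qed

lemma
  fixes x :: "'a::real_normed_vector"
  assumes "uniformly_smooth TYPE('a)"
  shows duality_map_self: "duality_map x x = norm x ^ 2"
    and norm_duality_map: "norm (duality_map x) = norm x"
  using someI_ex[OF norming_functional_exists[OF assms, of x]]
  by (simp_all add: duality_map_def)

lemma abs_duality_map_le:
  assumes "uniformly_smooth TYPE('a::real_normed_vector)"
  shows "\<bar>duality_map x y\<bar> \<le> norm x * norm (y :: 'a)"
  using norm_blinfun[of "duality_map x" y] norm_duality_map[OF assms] by simp

lemma duality_map_0:
  assumes "uniformly_smooth TYPE('a::real_normed_vector)"
  shows "duality_map (0 :: 'a) = 0"
  using norm_duality_map[OF assms, of 0] by simp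

lemma norming_functional_eq:
  fixes x :: "'a::real_normed_vector" and f :: "'a \<Rightarrow>\<^sub>L real"
  assumes us: "uniformly_smooth TYPE('a)" and x: "x \<noteq> 0"
    and f: "f x = norm x ^ 2" "norm f = norm x"
  shows "f w = norm x * norm_dir_deriv x w"
proof -
  have nx: "norm x > 0" using x by simp
  have le: "f v / norm x \<le> norm_dir_deriv x v" for v
  proof (rule norm_dir_deriv_greatest)
    fix s :: real assume s: "s > 0"
    have "f (x + s *\<^sub>R v) \<le> norm x * norm (x + s *\<^sub>R v)"
      using norm_blinfun[of f "x + s *\<^sub>R v"] f(2) by simp
    then have "s * f v \<le> norm x * (norm (x + s *\<^sub>R v) - norm x)"
      using f(1) by (simp add: blinfun.add_right blinfun.scaleR_right power2_eq_square algebra_simps)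
    then show "f v / norm x \<le> norm_diff_quot x v s"
      using s nx by (simp add: norm_diff_quot_def divide_simps mult.commute)
  qed
  have "f w / norm x = norm_dir_deriv x w"
    using le[of w] le[of "- w"] norm_dir_deriv_minus[OF us x, of w] by (simp add: blinfun.minus_right)
  then show ?thesis
    using nx by (simp add: divide_simps mult.commute)
qed

lemma duality_map_unique:
  fixes x :: "'a::real_normed_vector" and f :: "'a \<Rightarrow>\<^sub>L real"
  assumes us: "uniformly_smooth TYPE('a)" and f: "f x = norm x ^ 2" "norm f = norm x"
  shows "duality_map x = f"
proof (cases "x = 0")
  case True
  then show ?thesis using f(2) duality_map_0[OF us] by simp
next
  case False
  show ?thesis
    using norming_functional_eq[OF us False f] duality_map_self[OF us] norm_duality_map[OF us]
      norming_functional_eq[OF us False, of "duality_map x"]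
    by (intro blinfun_eqI) simp
qed

lemma duality_map_scaleR:
  assumes us: "uniformly_smooth TYPE('a::real_normed_vector)"
  shows "duality_map (c *\<^sub>R x) = c *\<^sub>R duality_map (x :: 'a)"
proof (rule duality_map_unique[OF us])
  have "(c *\<^sub>R duality_map x) (c *\<^sub>R x) = c * c * duality_map x x"
    by (simp add: blinfun.scaleR_left blinfun.scaleR_right)
  then show "(c *\<^sub>R duality_map x) (c *\<^sub>R x) = norm (c *\<^sub>R x) ^ 2"
    using duality_map_self[OF us, of x] by (simp add: power_mult_distrib abs_mult_self_eq power2_eq_square)
  show "norm (c *\<^sub>R duality_map x) = norm (c *\<^sub>R x)"
    using norm_duality_map[OF us, of x] by simp
qed

lemma duality_map_descent:
  fixes x k :: "'a::real_normed_vector"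
  assumes us: "uniformly_smooth TYPE('a)" and pos: "duality_map x k > 0"
  shows "\<exists>s>0. norm (x - s *\<^sub>R k) < norm x"
proof -
  have x: "x \<noteq> 0"
    using pos duality_map_0[OF us] by auto
  have "norm x * norm_dir_deriv x k > 0"
    using pos norming_functional_eq[OF us x duality_map_self[OF us] norm_duality_map[OF us]] by simp
  then have "norm_dir_deriv x (- k) < 0"
    using x norm_dir_deriv_minus[OF us x] by (simp add: zero_less_mult_iff)
  then obtain s where "s > 0" "norm_diff_quot x (- k) s < 0"
    using norm_dir_deriv_less_imp by blast
  then show ?thesis
    by (intro exI[of _ s]) (simp add: norm_diff_quot_def divide_less_0_iff)
qed

lemma inj_duality_map:
  assumes uc: "uniformly_convex TYPE('a::real_normed_vector)" and us: "uniformly_smooth TYPE('a)"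
  shows "inj (duality_map :: 'a \<Rightarrow> _)"
proof (rule injI)
  fix x y :: 'a assume eq: "duality_map x = duality_map y"
  define r where "r = norm x"
  have ry: "norm y = r"
    using norm_duality_map[OF us, of x] norm_duality_map[OF us, of y] eq by (simp add: r_def)
  have "duality_map x (midpoint x y) = r ^ 2"
    using duality_map_self[OF us, of x] duality_map_self[OF us, of y] eq ry
    by (simp add: midpoint_def blinfun.scaleR_right blinfun.add_right r_def)
  moreover have "duality_map x (midpoint x y) \<le> r * norm (midpoint x y)"
    using abs_duality_map_le[OF us, of x "midpoint x y"] by (simp add: r_def)
  ultimately have "r * r \<le> r * norm (midpoint x y)"
    by (simp add: power2_eq_square)
  then have "r \<le> norm (midpoint x y)" if "r > 0"
    using that by simp
  then show "x = y"
    using uniformly_convex_midpoint_eq[OF uc, of x r y] ry r_def by (cases "r > 0") auto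
qed

lemma duality_map_attains_imp_multiple:
  fixes x y :: "'a::real_normed_vector"
  assumes uc: "uniformly_convex TYPE('a)" and us: "uniformly_smooth TYPE('a)"
    and y: "y \<noteq> 0" and eq: "\<bar>duality_map x y\<bar> = norm x * norm y"
  shows "x = (duality_map x y / norm y ^ 2) *\<^sub>R y"
proof -
  define c where "c = duality_map x y / norm y ^ 2"
  have ny: "norm y > 0" using y by simp
  have "norm (c *\<^sub>R y) = norm x"
    using eq ny by (simp add: c_def abs_divide power2_eq_square)
  moreover have "duality_map x (c *\<^sub>R y) = (duality_map x y) ^ 2 / norm y ^ 2"
    by (simp add: c_def blinfun.scaleR_right power2_eq_square)
  moreover have "(duality_map x y) ^ 2 = (norm x * norm y) ^ 2"
    using eq power2_abs[of "duality_map x y"] by simp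
  ultimately have "norm (c *\<^sub>R y) = norm x" "duality_map x (c *\<^sub>R y) = norm x ^ 2"
    using ny by (simp_all add: power_mult_distrib)
  then have "duality_map (c *\<^sub>R y) = duality_map x"
    using norm_duality_map[OF us, of x] by (intro duality_map_unique[OF us]) simp_all
  then show ?thesis
    using inj_duality_map[OF uc us] by (simp add: c_def inj_eq)
qed

lemma duality_map_cross_less:
  fixes x y :: "'a::real_normed_vector"
  assumes uc: "uniformly_convex TYPE('a)" and us: "uniformly_smooth TYPE('a)"
    and nc: "\<not> collinear {0, x, y}"
  shows "duality_map x y * duality_map y x < norm x ^ 2 * norm y ^ 2"
proof -
  have "x \<noteq> 0" "y \<noteq> 0" using nc by (auto simp: collinear_lemma)
  have "\<not> (\<exists>c. x = c *\<^sub>R y)"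
    using nc collinear_lemma[of y x] by (simp add: insert_commute)
  then have "\<bar>duality_map x y\<bar> \<noteq> norm x * norm y"
    using duality_map_attains_imp_multiple[OF uc us \<open>y \<noteq> 0\<close>, of x] by blast
  then have less: "\<bar>duality_map x y\<bar> < norm x * norm y"
    using abs_duality_map_le[OF us, of x y] by simp
  have "duality_map x y * duality_map y x \<le> \<bar>duality_map x y\<bar> * \<bar>duality_map y x\<bar>"
    by (simp flip: abs_mult)
  also have "\<dots> \<le> \<bar>duality_map x y\<bar> * (norm x * norm y)"
    using abs_duality_map_le[OF us, of y x] by (intro mult_left_mono) (simp_all add: mult.commute)
  also have "\<dots> < (norm x * norm y) * (norm x * norm y)"
    using less \<open>x \<noteq> 0\<close> \<open>y \<noteq> 0\<close> by (intro mult_strict_right_mono) simp_all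
  finally show ?thesis
    by (simp add: power2_eq_square mult_ac)
qed

lemma collinear_duality_map_iff:
  fixes x y :: "'a::real_normed_vector"
  assumes uc: "uniformly_convex TYPE('a)" and us: "uniformly_smooth TYPE('a)"
  shows "collinear {0, duality_map x, duality_map y} \<longleftrightarrow> collinear {0, x, y}"
proof -
  have zero: "duality_map z = 0 \<longleftrightarrow> z = 0" for z :: 'a
    using norm_duality_map[OF us, of z] by (metis norm_eq_zero)
  have "duality_map y = c *\<^sub>R duality_map x \<longleftrightarrow> y = c *\<^sub>R x" for c
    using inj_duality_map[OF uc us] by (simp add: duality_map_scaleR[OF us, symmetric] inj_eq)
  then show ?thesis
    by (simp add: collinear_lemma zero)
qed

lemma norm_blinfun_approx:
  fixes f :: "'a::real_normed_vector \<Rightarrow>\<^sub>L real"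
  assumes "e > 0"
  shows "\<exists>u. norm u \<le> 1 \<and> norm f - e < f u"
proof (rule ccontr)
  assume "\<not> ?thesis"
  then have le: "f u \<le> norm f - e" if "norm u \<le> 1" for u
    using that by (meson not_less)
  have "norm f \<le> norm f - e"
  proof (rule norm_blinfun_bound)
    show "0 \<le> norm f - e" using le[of 0] by simp
    show "norm (f x) \<le> (norm f - e) * norm x" for x
    proof (cases "x = 0")
      case False
      define u where "u = (1 / norm x) *\<^sub>R x"
      have "norm u \<le> 1" "norm (- u) \<le> 1" using False by (simp_all add: u_def)
      then have "\<bar>f u\<bar> \<le> norm f - e"
        using le[of u] le[of "- u"] by (simp add: blinfun.minus_right)
      moreover have "f u = f x / norm x"
        by (simp add: u_def blinfun.scaleR_right)
      ultimately show ?thesis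
        using False by (simp add: abs_divide pos_divide_le_eq)
    qed simp
  qed
  with \<open>e > 0\<close> show False by simp
qed

lemma norm_blinfun_maximizing_sequence:
  fixes f :: "'a::real_normed_vector \<Rightarrow>\<^sub>L real"
  obtains s where "\<And>n. norm (s n) \<le> 1" "(\<lambda>n. f (s n)) \<longlonglongrightarrow> norm f"
proof -
  define \<delta> where "\<delta> n = inverse (real (Suc n))" for n
  have \<delta>: "\<delta> \<longlonglongrightarrow> 0" "\<And>n. 0 < \<delta> n"
    using LIMSEQ_inverse_real_of_nat by (simp_all add: \<delta>_def[abs_def])
  have "\<exists>u. norm u \<le> 1 \<and> norm f - \<delta> n < blinfun_apply f u" for n
    using \<delta>(2) by (rule norm_blinfun_approx)
  then obtain s where s: "\<And>n. norm (s n) \<le> 1" and s_near: "\<And>n. norm f - \<delta> n < f (s n)"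
    by metis
  have f_le: "f (s n) \<le> norm f" for n
  proof -
    have "\<bar>f (s n)\<bar> \<le> norm f * norm (s n)"
      using norm_blinfun[of f "s n"] by simp
    also have "\<dots> \<le> norm f"
      using mult_left_mono[OF s[of n] norm_ge_zero[of f]] by simp
    finally show ?thesis by simp
  qed
  have lim: "(\<lambda>n. f (s n)) \<longlonglongrightarrow> norm f"
  proof (rule tendsto_sandwich[OF _ _ _ tendsto_const])
    show "(\<lambda>n. norm f - \<delta> n) \<longlonglongrightarrow> norm f"
      using tendsto_diff[OF tendsto_const \<delta>(1), of "norm f"] by simp
    show "eventually (\<lambda>n. norm f - \<delta> n \<le> f (s n)) sequentially"
    proof (intro always_eventually allI)
      fix n show "norm f - \<delta> n \<le> f (s n)"
        using s_near[of n] by simp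
    qed
  qed (simp add: always_eventually f_le)
  show thesis by (rule that[OF s lim])
qed

lemma norm_blinfun_attained:
  fixes f :: "'a::banach \<Rightarrow>\<^sub>L real"
  assumes uc: "uniformly_convex TYPE('a)" and f: "f \<noteq> 0"
  shows "\<exists>u. norm u = 1 \<and> f u = norm f"
proof -
  have nf: "norm f > 0" using f by simp
  obtain s where s: "\<And>n. norm (s n) \<le> 1" and lim: "(\<lambda>n. f (s n)) \<longlonglongrightarrow> norm f"
    by (metis norm_blinfun_maximizing_sequence)
  have f_le: "f (s n) \<le> norm f" for n
    using norm_blinfun[of f "s n"] mult_left_mono[OF s[of n] norm_ge_zero[of f]] by simp
  define \<epsilon> where "\<epsilon> n = (norm f - f (s n)) / norm f" for n
  have "\<epsilon> \<longlonglongrightarrow> 0"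
    using tendsto_divide[OF tendsto_diff[OF tendsto_const lim] tendsto_const, of "norm f" "norm f"] nf
    by (simp add: \<epsilon>_def[abs_def])
  have \<epsilon>_nonneg: "0 \<le> \<epsilon> n" for n
    using f_le[of n] nf by (simp add: \<epsilon>_def)
  obtain u where u: "s \<longlonglongrightarrow> u" and "norm u = 1"
  proof (rule uniformly_convex_limit[OF uc _ \<open>\<epsilon> \<longlonglongrightarrow> 0\<close> \<epsilon>_nonneg])
    show "norm (s n) \<le> 1 + \<epsilon> n" for n
      using s[of n] \<epsilon>_nonneg[of n] by simp
    show "1 - (\<epsilon> m + \<epsilon> n) \<le> norm (midpoint (s m) (s n))" for m n
    proof -
      have "norm f * \<epsilon> k = norm f - f (s k)" for k
        using nf by (simp add: \<epsilon>_def)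
      then have "norm f * (1 - (\<epsilon> m + \<epsilon> n)) = f (s m) + f (s n) - norm f"
        by (simp add: right_diff_distrib distrib_left)
      also have "\<dots> \<le> (f (s m) + f (s n)) / 2"
        using f_le[of m] f_le[of n] by (simp add: le_divide_eq_numeral1)
      also have "\<dots> = f (midpoint (s m) (s n))"
        by (simp add: midpoint_def blinfun.scaleR_right blinfun.add_right)
      also have "\<dots> \<le> norm f * norm (midpoint (s m) (s n))"
        using norm_blinfun[of f "midpoint (s m) (s n)"] by simp
      finally show ?thesis
        using nf by simp
    qed
  qed simp
  have "f u = norm f"
    using LIMSEQ_unique[OF blinfun.tendsto[OF tendsto_const u] lim] .
  with \<open>norm u = 1\<close> show ?thesis by blast
qed

lemma surj_duality_map:
  assumes uc: "uniformly_convex TYPE('a::banach)" and us: "uniformly_smooth TYPE('a)"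
  shows "surj (duality_map :: 'a \<Rightarrow> _)"
proof (rule surjI)
  fix f :: "'a \<Rightarrow>\<^sub>L real"
  show "duality_map (if f = 0 then 0 else norm f *\<^sub>R (SOME u. norm u = 1 \<and> f u = norm f)) = f"
  proof (cases "f = 0")
    case True then show ?thesis using duality_map_0[OF us] by simp
  next
    case False
    define u where "u = (SOME u. norm u = 1 \<and> f u = norm f)"
    have u: "norm u = 1" "f u = norm f"
      unfolding u_def using someI_ex[OF norm_blinfun_attained[OF uc False]] by blast+
    have "duality_map (norm f *\<^sub>R u) = f"
      using u by (intro duality_map_unique[OF us]) (simp_all add: blinfun.scaleR_right power2_eq_square)
    with False show ?thesis by (simp add: u_def)
  qed
qed

section \<open>Polars of closed convex cones\<close>

lemma polar_iff:
  fixes K :: "'a::banach set"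
  assumes uc: "uniformly_convex TYPE('a)" and us: "uniformly_smooth TYPE('a)"
    and K: "convex_cone K" "closed K"
  shows "x \<in> polar K \<longleftrightarrow> (\<forall>k\<in>K. duality_map x k \<le> 0)"
proof
  have "convex K" "K \<noteq> {}" using K(1) by (simp_all add: convex_cone_def)
  assume "x \<in> polar K"
  obtain c where c: "c \<in> K" and c_min: "\<And>d. d \<in> K \<Longrightarrow> norm (x - c) \<le> norm (x - d)"
    using nearest_point_exists[OF uc K(2) \<open>convex K\<close> \<open>K \<noteq> {}\<close>] by blast
  have "c = 0"
    using metric_projection_eqI[OF uc \<open>convex K\<close> c c_min] \<open>x \<in> polar K\<close> by (simp add: polar_def)
  show "\<forall>k\<in>K. duality_map x k \<le> 0"
  proof (rule ballI, rule ccontr)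
    fix k assume "k \<in> K" "\<not> duality_map x k \<le> 0"
    then obtain s where "s > 0" "norm (x - s *\<^sub>R k) < norm x"
      using duality_map_descent[OF us] by (meson not_le)
    moreover have "s *\<^sub>R k \<in> K"
      using convex_cone_scaleR[OF K(1)] \<open>s > 0\<close> \<open>k \<in> K\<close> by simp
    ultimately show False
      using c_min \<open>c = 0\<close> by fastforce
  qed
next
  assume nonpos: "\<forall>k\<in>K. duality_map x k \<le> 0"
  have "convex K" using K(1) by (simp add: convex_cone_def)
  have "norm (x - 0) \<le> norm (x - d)" if "d \<in> K" for d
  proof -
    have "norm x ^ 2 \<le> duality_map x x - duality_map x d"
      using nonpos that duality_map_self[OF us, of x] by simp
    also have "\<dots> \<le> norm x * norm (x - d)"
      using abs_duality_map_le[OF us, of x "x - d"] by (simp add: blinfun.diff_right)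
    finally show ?thesis
      by (cases "x = 0") (simp_all add: power2_eq_square)
  qed
  then have "metric_projection K x = 0"
    using metric_projection_eqI[OF uc \<open>convex K\<close> convex_cone_contains_0[OF K(1)]] by blast
  then show "x \<in> polar K" by (simp add: polar_def)
qed

lemma collinear_0_iff:
  "collinear {0, x, y} \<longleftrightarrow> (\<exists>c. y = c *\<^sub>R x) \<or> (\<exists>c. x = c *\<^sub>R y)"
proof
  assume "collinear {0, x, y}"
  then consider "x = 0" | "y = 0" | "\<exists>c. y = c *\<^sub>R x" by (auto simp: collinear_lemma)
  then show "(\<exists>c. y = c *\<^sub>R x) \<or> (\<exists>c. x = c *\<^sub>R y)"
    by cases (metis scaleR_zero_left)+
next
  assume "(\<exists>c. y = c *\<^sub>R x) \<or> (\<exists>c. x = c *\<^sub>R y)"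
  moreover have "y = (1 / c) *\<^sub>R x" if "x = c *\<^sub>R y" "c \<noteq> 0" for c
    using that by simp
  ultimately show "collinear {0, x, y}"
    unfolding collinear_lemma by (metis scaleR_zero_left)
qed

lemma not_collinear_iff_independent:
  "\<not> collinear {0, x, y} \<longleftrightarrow> independent {x, y} \<and> x \<noteq> y"
proof -
  have "independent {x, y} \<and> x \<noteq> y \<longleftrightarrow> x \<noteq> y \<and> y \<noteq> 0 \<and> \<not> (\<exists>c. x = c *\<^sub>R y)"
    by (auto simp: independent_insert span_singleton)
  moreover have "x = (1 / c) *\<^sub>R y" if "y = c *\<^sub>R x" "c \<noteq> 0" for c
    using that by simp
  ultimately show ?thesis
    unfolding collinear_0_iff by (metis scaleR_one scaleR_zero_left)
qed

lemma dim_span_not_collinear: "\<not> collinear {0, x, y} \<Longrightarrow> dim (span {x, y}) = 2"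
  by (simp add: not_collinear_iff_independent dim_eq_card_independent)

lemma subspace_dim_2_obtain:
  assumes "subspace D" "dim D = 2"
  obtains f g where "\<not> collinear {0, f, g}" "D = span {f, g}"
proof -
  obtain B where B: "B \<subseteq> D" "independent B" "D \<subseteq> span B" "card B = 2"
    using basis_exists[of D] assms(2) by metis
  then obtain f g where "B = {f, g}" "f \<noteq> g"
    by (meson card_2_iff)
  moreover have "span B = D"
    using B span_minimal[OF B(1) assms(1)] by blast
  ultimately show thesis
    using B(2) that by (simp add: not_collinear_iff_independent)
qed

lemma not_collinear_add:
  assumes "\<not> collinear {0, x, y}"
  shows "\<not> collinear {0, x, x + y}"
proof
  assume "collinear {0, x, x + y}"
  then consider c where "x + y = c *\<^sub>R x" | c where "x = c *\<^sub>R (x + y)"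
    unfolding collinear_0_iff by blast
  then show False
  proof cases
    case 1
    then have "y = (c - 1) *\<^sub>R x" by (simp add: algebra_simps)
    with assms show False by (auto simp: collinear_0_iff)
  next
    case 2
    then have "c *\<^sub>R y = (1 - c) *\<^sub>R x" by (simp add: algebra_simps)
    then have "y = ((1 - c) / c) *\<^sub>R x" if "c \<noteq> 0"
      using that by (metis divide_inverse_commute scaleR_scaleR inverse_eq_divide
          divide_self_if scaleR_one)
    moreover have "x = 0 *\<^sub>R y" if "c = 0" using 2 that by simp
    ultimately show False
      using assms unfolding collinear_0_iff by (cases "c = 0") blast+
  qed
qed

lemma collinear_add_nonneg_multiple:
  fixes x y :: "'a::real_vector"
  assumes "collinear {0, x, y}"
  shows "\<exists>c\<ge>0. x + y = c *\<^sub>R x \<or> x + y = c *\<^sub>R y"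
proof -
  have *: "\<exists>c\<ge>0. u + v = c *\<^sub>R u \<or> u + v = c *\<^sub>R v" if "v = c *\<^sub>R u" for u v :: 'a and c
  proof (cases "1 + c \<ge> 0")
    case True
    then show ?thesis using that by (intro exI[of _ "1 + c"]) (simp add: algebra_simps)
  next
    case False
    then have "c < -1" by simp
    have "((1 + c) / c) *\<^sub>R v = ((1 + c) / c * c) *\<^sub>R u"
      using that by simp
    also have "(1 + c) / c * c = 1 + c"
      using \<open>c < -1\<close> by simp
    also have "(1 + c) *\<^sub>R u = u + v"
      using that by (simp add: algebra_simps)
    finally have "u + v = ((1 + c) / c) *\<^sub>R v" ..
    moreover have "(1 + c) / c \<ge> 0"
      using \<open>c < -1\<close> by (simp add: divide_nonpos_neg)
    ultimately show ?thesis by blast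
  qed
  from assms consider c where "y = c *\<^sub>R x" | c where "x = c *\<^sub>R y"
    unfolding collinear_0_iff by blast
  then show ?thesis
  proof cases
    case 1
    then show ?thesis by (rule *)
  next
    case 2
    then show ?thesis using *[OF 2] by (metis add.commute)
  qed
qed

lemma span_pair_iff: "h \<in> span {f, g} \<longleftrightarrow> (\<exists>a b. h = a *\<^sub>R f + b *\<^sub>R g)"
proof -
  have "h - a *\<^sub>R f = b *\<^sub>R g \<longleftrightarrow> h = a *\<^sub>R f + b *\<^sub>R g" for a b
    by (auto simp: algebra_simps)
  then show ?thesis
    by (auto simp: span_breakdown_eq span_singleton)
qed

lemma blinfun_separating_vector:
  fixes f g :: "'a::real_normed_vector \<Rightarrow>\<^sub>L real"
  assumes nc: "\<not> collinear {0, f, g}"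
  shows "\<exists>e. f e = 1 \<and> g e = 0"
proof -
  have "g \<noteq> 0" using nc by (auto simp: collinear_lemma)
  then obtain u where u: "g u \<noteq> 0"
    by (metis blinfun_eqI zero_blinfun.rep_eq)
  have "\<exists>e. g e = 0 \<and> f e \<noteq> 0"
  proof (rule ccontr)
    assume "\<not> ?thesis"
    then have ker: "f e = 0" if "g e = 0" for e
      using that by blast
    have "f = (f u / g u) *\<^sub>R g"
    proof (rule blinfun_eqI)
      fix x
      have "g (x - (g x / g u) *\<^sub>R u) = 0"
        using u by (simp add: blinfun.diff_right blinfun.scaleR_right)
      then have "f (x - (g x / g u) *\<^sub>R u) = 0" by (rule ker)
      then show "f x = ((f u / g u) *\<^sub>R g) x"
        by (simp add: blinfun.diff_right blinfun.scaleR_right blinfun.scaleR_left)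
    qed
    with nc show False by (auto simp: collinear_0_iff)
  qed
  then obtain e where "g e = 0" "f e \<noteq> 0" by blast
  then show ?thesis
    by (intro exI[of _ "(1 / f e) *\<^sub>R e"]) (simp add: blinfun.scaleR_right)
qed

lemma blinfun_in_span_if_kernel:
  fixes f g h :: "'a::real_normed_vector \<Rightarrow>\<^sub>L real"
  assumes nc: "\<not> collinear {0, f, g}"
    and ker: "\<And>k. f k = 0 \<Longrightarrow> g k = 0 \<Longrightarrow> h k = 0"
  shows "h \<in> span {f, g}"
proof -
  obtain e1 where e1: "f e1 = 1" "g e1 = 0"
    using blinfun_separating_vector[OF nc] by blast
  have "\<not> collinear {0, g, f}" using nc by (simp add: insert_commute)
  then obtain e2 where e2: "g e2 = 1" "f e2 = 0"
    using blinfun_separating_vector by blast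
  have "h = h e1 *\<^sub>R f + h e2 *\<^sub>R g"
  proof (rule blinfun_eqI)
    fix x
    have "h (x - f x *\<^sub>R e1 - g x *\<^sub>R e2) = 0"
      using e1 e2 by (intro ker) (simp_all add: blinfun.diff_right blinfun.scaleR_right)
    then show "h x = (h e1 *\<^sub>R f + h e2 *\<^sub>R g) x"
      by (simp add: blinfun.diff_right blinfun.add_right blinfun.scaleR_right
          blinfun.add_left blinfun.scaleR_left algebra_simps)
  qed
  then show ?thesis
    unfolding span_pair_iff by blast
qed

lemma linear_system_2x2_solvable:
  fixes a b c d p q :: real
  assumes "a * d - b * c \<noteq> 0"
  shows "\<exists>u v. u * a + v * b = p \<and> u * c + v * d = q"
proof -
  define \<Delta> where "\<Delta> = a * d - b * c"
  have "\<Delta> \<noteq> 0" using assms by (simp add: \<Delta>_def)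
  have "(p * d - b * q) / \<Delta> * a + (a * q - c * p) / \<Delta> * b = p"
    "(p * d - b * q) / \<Delta> * c + (a * q - c * p) / \<Delta> * d = q"
    using \<open>\<Delta> \<noteq> 0\<close> by (simp_all add: field_simps) (simp_all add: \<Delta>_def algebra_simps)
  then show ?thesis by blast
qed

section \<open>Preimages of planes under the duality map\<close>

lemma convex_cone_common_kernel:
  fixes f g :: "'a::real_normed_vector \<Rightarrow>\<^sub>L real"
  shows "convex_cone {k. f k = 0 \<and> g k = 0}"
proof -
  have "subspace {k. f k = 0 \<and> g k = 0}"
    by (auto simp: subspace_def blinfun.add_right blinfun.scaleR_right)
  then show ?thesis by (simp add: subspace_convex_cone_symmetric)
qed

lemma closed_common_kernel:
  fixes f g :: "'a::real_normed_vector \<Rightarrow>\<^sub>L real"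
  shows "closed {k. f k = 0 \<and> g k = 0}"
  by (intro closed_Collect_conj closed_Collect_eq continuous_intros)

lemma polar_common_kernel:
  fixes f g :: "'a::banach \<Rightarrow>\<^sub>L real"
  assumes uc: "uniformly_convex TYPE('a)" and us: "uniformly_smooth TYPE('a)"
    and nc: "\<not> collinear {0, f, g}"
  shows "polar {k. f k = 0 \<and> g k = 0} = {x. duality_map x \<in> span {f, g}}"
proof -
  have "(\<forall>k. f k = 0 \<and> g k = 0 \<longrightarrow> duality_map x k \<le> 0) \<longleftrightarrow> duality_map x \<in> span {f, g}" for x
  proof
    assume nonpos: "\<forall>k. f k = 0 \<and> g k = 0 \<longrightarrow> duality_map x k \<le> 0"
    show "duality_map x \<in> span {f, g}"
    proof (rule blinfun_in_span_if_kernel[OF nc])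
      fix k assume "f k = 0" "g k = 0"
      then show "duality_map x k = 0"
        using nonpos[rule_format, of k] nonpos[rule_format, of "- k"]
        by (simp add: blinfun.minus_right)
    qed
  next
    assume "duality_map x \<in> span {f, g}"
    then show "\<forall>k. f k = 0 \<and> g k = 0 \<longrightarrow> duality_map x k \<le> 0"
      by (auto simp: span_pair_iff blinfun.add_left blinfun.scaleR_left)
  qed
  then show ?thesis
    using polar_iff[OF uc us convex_cone_common_kernel closed_common_kernel] by auto
qed

text \<open>A vector \<open>w\<close> of the preimage annihilated by \<open>J x\<close> and \<open>J y\<close> is annihilated by \<open>J w\<close>,
  hence zero.\<close>

lemma duality_preimage_plane_eq_span:
  fixes x y :: "'a::real_normed_vector"
  assumes uc: "uniformly_convex TYPE('a)" and us: "uniformly_smooth TYPE('a)"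
    and nc: "\<not> collinear {0, x, y}"
    and sub: "subspace {z. duality_map z \<in> span {duality_map x, duality_map y}}"
  shows "{z. duality_map z \<in> span {duality_map x, duality_map y}} = span {x, y}"
    (is "?E = _")
proof
  show "span {x, y} \<subseteq> ?E"
    using sub by (intro span_minimal) (auto intro: span_base)
next
  show "?E \<subseteq> span {x, y}"
  proof
    fix z assume "z \<in> ?E"
    have "duality_map x x * duality_map y y - duality_map x y * duality_map y x \<noteq> 0"
      using duality_map_cross_less[OF uc us nc] by (simp add: duality_map_self[OF us])
    then obtain u v where uv:
      "u * duality_map x x + v * duality_map x y = duality_map x z"
      "u * duality_map y x + v * duality_map y y = duality_map y z"
      using linear_system_2x2_solvable by blast
    define w where "w = z - u *\<^sub>R x - v *\<^sub>R y"
    have ker: "duality_map x w = 0" "duality_map y w = 0"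
      using uv by (simp_all add: w_def blinfun.diff_right blinfun.scaleR_right)
    have "w \<in> ?E"
      unfolding w_def using sub \<open>z \<in> ?E\<close>
      by (intro subspace_diff subspace_scale) (auto intro: span_base)
    then obtain a b where "duality_map w = a *\<^sub>R duality_map x + b *\<^sub>R duality_map y"
      by (auto simp: span_pair_iff)
    then have "norm w ^ 2 = 0"
      using ker duality_map_self[OF us, of w] by (simp add: blinfun.add_left blinfun.scaleR_left)
    then have "z = u *\<^sub>R x + v *\<^sub>R y"
      by (simp add: w_def algebra_simps)
    then show "z \<in> span {x, y}"
      by (auto simp: span_pair_iff)
  qed
qed

lemma duality_preimage_plane_if_convex_polars:
  fixes D :: "('a::banach \<Rightarrow>\<^sub>L real) set"
  assumes uc: "uniformly_convex TYPE('a)" and us: "uniformly_smooth TYPE('a)"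
    and convex_polars: "\<forall>K::'a set. convex_cone K \<and> closed K \<longrightarrow> convex (polar K)"
    and D: "subspace D" "dim D = 2"
  shows "subspace {x::'a. duality_map x \<in> D} \<and> dim {x::'a. duality_map x \<in> D} = 2"
proof -
  obtain f g where nc: "\<not> collinear {0, f, g}" and D_eq: "D = span {f, g}"
    using subspace_dim_2_obtain[OF D] .
  define E where "E = {x::'a. duality_map x \<in> D}"
  have "convex E"
    using convex_polars[rule_format, OF conjI[OF convex_cone_common_kernel closed_common_kernel]]
    by (simp add: E_def D_eq flip: polar_common_kernel[OF uc us nc])
  moreover have scale: "c *\<^sub>R x \<in> E" if "x \<in> E" for c x
    using that D(1) by (simp add: E_def duality_map_scaleR[OF us] subspace_scale)
  moreover have "0 \<in> E"
    using D(1) by (simp add: E_def duality_map_0[OF us] subspace_0)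
  ultimately have "subspace E"
    unfolding subspace_convex_cone_symmetric convex_cone_def conic_def
    using scale[of _ "-1"] by auto
  obtain x y where xy: "duality_map x = f" "duality_map y = g"
    using surj_duality_map[OF uc us] by (metis surjD)
  have "\<not> collinear {0, x, y}"
    using nc collinear_duality_map_iff[OF uc us, of x y] xy by simp
  moreover have "subspace {z. duality_map z \<in> span {duality_map x, duality_map y}}"
    using \<open>subspace E\<close> xy by (simp add: E_def D_eq)
  ultimately have "E = span {x, y}"
    using duality_preimage_plane_eq_span[OF uc us] xy by (simp add: E_def D_eq)
  then show ?thesis
    using \<open>subspace E\<close> dim_span_not_collinear[OF \<open>\<not> collinear {0, x, y}\<close>] by (simp add: E_def)
qed

lemma duality_map_add_coeffs_pos:
  fixes x y :: "'a::real_normed_vector"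
  assumes uc: "uniformly_convex TYPE('a)" and us: "uniformly_smooth TYPE('a)"
    and nc: "\<not> collinear {0, x, y}"
    and J_add: "duality_map (x + y) = a *\<^sub>R duality_map x + b *\<^sub>R duality_map y"
  shows "0 < a \<and> 0 < b"
proof -
  define A B C D where "A = duality_map x x" and "B = duality_map x y"
    and "C = duality_map y x" and "D = duality_map y y"
  have sq: "norm x ^ 2 = A" "norm y ^ 2 = D"
    by (simp_all add: A_def D_def duality_map_self[OF us])
  have Jx: "duality_map (x + y) x = a * A + b * C" and Jy: "duality_map (x + y) y = a * B + b * D"
    by (simp_all add: J_add A_def B_def C_def D_def blinfun.add_left blinfun.scaleR_left)
  have sq_add: "norm (x + y) ^ 2 = a * A + b * C + (a * B + b * D)"
    using duality_map_self[OF us, of "x + y"] Jx Jy by (simp add: blinfun.add_right)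
  have nc_left: "\<not> collinear {0, x, x + y}"
    using not_collinear_add[OF nc] .
  have "\<not> collinear {0, y, y + x}"
    using nc by (intro not_collinear_add) (simp add: insert_commute)
  then have nc_right: "\<not> collinear {0, x + y, y}"
    by (simp add: insert_commute add.commute)
  have det: "0 < A * D - B * C"
    using duality_map_cross_less[OF uc us nc] sq by (simp add: B_def C_def)
  have "(A + B) * (a * A + b * C) < A * (a * A + b * C + (a * B + b * D))"
    using duality_map_cross_less[OF uc us nc_left] sq sq_add Jx
    by (simp add: A_def B_def blinfun.add_right)
  then have "0 < b * (A * D - B * C)"
    by (simp add: algebra_simps)
  moreover have "(a * B + b * D) * (C + D) < (a * A + b * C + (a * B + b * D)) * D"
    using duality_map_cross_less[OF uc us nc_right] sq sq_add Jy
    by (simp add: C_def D_def blinfun.add_right)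
  then have "0 < a * (A * D - B * C)"
    by (simp add: algebra_simps)
  ultimately show ?thesis
    using det by (simp add: zero_less_mult_iff)
qed

lemma duality_map_add_pos_combination:
  fixes x y :: "'a::banach"
  assumes uc: "uniformly_convex TYPE('a)" and us: "uniformly_smooth TYPE('a)"
    and planes: "\<forall>D :: ('a \<Rightarrow>\<^sub>L real) set. subspace D \<and> dim D = 2 \<longrightarrow>
             subspace {x::'a. duality_map x \<in> D} \<and> dim {x::'a. duality_map x \<in> D} = 2"
    and nc: "\<not> collinear {0, x, y}"
  obtains a b where "0 < a" "0 < b"
    "duality_map (x + y) = a *\<^sub>R duality_map x + b *\<^sub>R duality_map y"
proof -
  define D where "D = span {duality_map x, duality_map y}"
  have "subspace D" "dim D = 2"
    using dim_span_not_collinear nc collinear_duality_map_iff[OF uc us, of x y]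
    by (simp_all add: D_def subspace_span)
  then have "subspace {z. duality_map z \<in> D}"
    using planes by blast
  then have "x + y \<in> {z. duality_map z \<in> D}"
    by (rule subspace_add) (simp_all add: D_def span_base)
  then obtain a b where J_add: "duality_map (x + y) = a *\<^sub>R duality_map x + b *\<^sub>R duality_map y"
    by (auto simp: D_def span_pair_iff)
  moreover have "0 < a" "0 < b"
    using duality_map_add_coeffs_pos[OF uc us nc J_add] by simp_all
  ultimately show thesis
    using that[of a b] by blast
qed

lemma convex_polar_if_duality_preimage_planes:
  fixes K :: "'a::banach set"
  assumes uc: "uniformly_convex TYPE('a)" and us: "uniformly_smooth TYPE('a)"
    and planes: "\<forall>D :: ('a \<Rightarrow>\<^sub>L real) set. subspace D \<and> dim D = 2 \<longrightarrow>
             subspace {x::'a. duality_map x \<in> D} \<and> dim {x::'a. duality_map x \<in> D} = 2"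
    and K: "convex_cone K" "closed K"
  shows "convex (polar K)"
proof -
  note polar = polar_iff[OF uc us K]
  have scale: "c *\<^sub>R x \<in> polar K" if "x \<in> polar K" "c \<ge> 0" for c x
    using that by (auto simp: polar duality_map_scaleR[OF us] blinfun.scaleR_left mult_nonneg_nonpos)
  have add: "x + y \<in> polar K" if x: "x \<in> polar K" and y: "y \<in> polar K" for x y
  proof (cases "collinear {0, x, y}")
    case True
    then show ?thesis
      using collinear_add_nonneg_multiple scale x y by metis
  next
    case False
    then obtain a b where "0 < a" "0 < b"
      and J_add: "duality_map (x + y) = a *\<^sub>R duality_map x + b *\<^sub>R duality_map y"
      using duality_map_add_pos_combination[OF uc us planes] by metis
    then show ?thesis
      using x y by (auto simp: polar J_add blinfun.add_left blinfun.scaleR_left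
          add_nonpos_nonpos mult_nonneg_nonpos)
  qed
  have "0 \<in> polar K"
    by (simp add: polar duality_map_0[OF us])
  with scale add have "convex_cone (polar K)"
    by (simp add: convex_cone_iff)
  then show ?thesis
    by (simp add: convex_cone_def)
qed

theorem theorem1:
  assumes "uniformly_convex TYPE('a::banach)"
    and "uniformly_smooth TYPE('a)"
  shows "(\<forall>K::'a set. convex_cone K \<and> closed K \<longrightarrow> convex (polar K)) \<longleftrightarrow>
         (\<forall>D :: ('a \<Rightarrow>\<^sub>L real) set. subspace D \<and> dim D = 2 \<longrightarrow>
             subspace {x::'a. duality_map x \<in> D} \<and> dim {x::'a. duality_map x \<in> D} = 2)"
  using duality_preimage_plane_if_convex_polars[OF assms]
    convex_polar_if_duality_preimage_planes[OF assms] by blast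

end
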